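(* Suppose the true density is $g=f_\theta$ for some $\theta\in\Theta$. Then the influence function of the minimum $S^*$-divergence functional $T^*_{(\alpha,\lambda)}$ at $G=F_\theta$ is $$IF(y;F_\theta,T^*_{(\alpha,\lambda)})=[J^*(\theta)]^{-1}\left\{u^{\alpha*}_\theta(y)-E_\theta[u^{\alpha*}_\theta(X)]\right\},$$ where $J^*(\theta)=E_\theta[u^{2\alpha*}_\theta(X)]$. In particular it does not depend on $\lambda$.
   Context: Let $\{F_\theta:\theta\in\Theta\subseteq\mathbb{R}^p\}$ be a parametric family of distributions on $\mathbb{R}$ with Lebesgue densities $f_\theta$. Fix $\alpha\ge 0$, $\lambda\in\mathbb{R}$ and put $A=1+\lambda(1-\alpha)$, $B=\alpha-\lambda(1-\alpha)$. For densities $g,f$ the $S$-divergence is $S_{(\alpha,\lambda)}(g,f)=\frac1A\int f^{1+\alpha}-\frac{1+\alpha}{AB}\int f^Bg^A+\frac1B\int g^{1+\alpha}$ (defined by continuous limits when $A=0$ or $B=0$). Let $W(x,y,h)\ge0$ be a kernel with fixed bandwidth $h>0$ which, for each $y$, is a probability density in $x$. Define $f^*_\theta(x)=\int W(x,y,h)f_\theta(y)\,dy$, $g^*(x)=\int W(x,y,h)\,dG(y)$, $\tilde u_\theta=\nabla_\theta\log f^*_\theta$, and $u^{\alpha*}_\theta(y)=\int\tilde u_\theta(x)\{f^*_\theta(x)\}^\alpha W(x,y,h)\,dx$, $u^{2\alpha*}_\theta(y)=\int\tilde u_\theta(x)\tilde u_\theta(x)^T\{f^*_\theta(x)\}^\alpha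 W(x,y,h)\,dx$. $E_\theta$ denotes expectation with $X\sim f_\theta$. The minimum $S^*$-divergence functional $T^*_{(\alpha,\lambda)}(G)$ is defined by $S_{(\alpha,\lambda)}(g^*,f^*_{T^*_{(\alpha,\lambda)}(G)})=\min_{\theta\in\Theta}S_{(\alpha,\lambda)}(g^*,f^*_\theta)$, and satisfies $\int K(g^*/f^*_\theta-1)(f^*_\theta)^{1+\alpha}\tilde u_\theta=0$ with $K(\delta)=((\delta+1)^A-1)/A$ ($\log(1+\delta)$ if $A=0$). The influence function is $IF(y;G,T)=\frac{\partial}{\partial\epsilon}T((1-\epsilon)G+\epsilon\wedge_y)\big|_{\epsilon=0}$, with $\wedge_y$ the point mass at $y$. *)

theory Defs
  imports "HOL-Analysis.Analysis"
begin

text \<open>Model density family: f t is the Lebesgue density f_t of F_t; kernel W x y (bandwidth h fixed, suppressed).\<close>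

definition Fdist :: "('p \<Rightarrow> real \<Rightarrow> real) \<Rightarrow> 'p \<Rightarrow> real measure" where
  "Fdist f t = density lborel (\<lambda>x. ennreal (f t x))"

definition fstar :: "('p \<Rightarrow> real \<Rightarrow> real) \<Rightarrow> (real \<Rightarrow> real \<Rightarrow> real) \<Rightarrow> 'p \<Rightarrow> real \<Rightarrow> real" where
  "fstar f W t x = (\<integral>z. W x z * f t z \<partial>lborel)"

definition gstar :: "(real \<Rightarrow> real \<Rightarrow> real) \<Rightarrow> real measure \<Rightarrow> real \<Rightarrow> real" where
  "gstar W G x = (\<integral>z. W x z \<partial>G)"

definition contam :: "real measure \<Rightarrow> real \<Rightarrow> real \<Rightarrow> real measure" where
  "contam G y e = measure_of (space G) (sets G)
     (\<lambda>A. ennreal (1 - e) * emeasure G A + ennreal e * indicator A y)"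

definition Acoef :: "real \<Rightarrow> real \<Rightarrow> real" where
  "Acoef \<alpha> lam = 1 + lam * (1 - \<alpha>)"

definition Bcoef :: "real \<Rightarrow> real \<Rightarrow> real" where
  "Bcoef \<alpha> lam = \<alpha> - lam * (1 - \<alpha>)"

text \<open>S-divergence S_(alpha,lambda)(g,f), with the continuous limits for A = 0 or B = 0.\<close>
definition Sdiv :: "real \<Rightarrow> real \<Rightarrow> (real \<Rightarrow> real) \<Rightarrow> (real \<Rightarrow> real) \<Rightarrow> real" where
  "Sdiv \<alpha> lam g f =
    (let A = Acoef \<alpha> lam; B = Bcoef \<alpha> lam in
     if A = 0 then
       (\<integral>x. f x powr (1 + \<alpha>) * ln (f x / g x) \<partial>lborel)
       - (1 / (1 + \<alpha>)) * (\<integral>x. f x powr (1 + \<alpha>) - g x powr (1 + \<alpha>) \<partial>lborel)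
     else if B = 0 then
       (\<integral>x. g x powr (1 + \<alpha>) * ln (g x / f x) \<partial>lborel)
       - (1 / (1 + \<alpha>)) * (\<integral>x. g x powr (1 + \<alpha>) - f x powr (1 + \<alpha>) \<partial>lborel)
     else
       (1 / A) * (\<integral>x. f x powr (1 + \<alpha>) \<partial>lborel)
       - ((1 + \<alpha>) / (A * B)) * (\<integral>x. f x powr B * g x powr A \<partial>lborel)
       + (1 / B) * (\<integral>x. g x powr (1 + \<alpha>) \<partial>lborel))"

definition Kfun :: "real \<Rightarrow> real \<Rightarrow> real" where
  "Kfun A \<delta> = (if A = 0 then ln (1 + \<delta>) else ((\<delta> + 1) powr A - 1) / A)"

definition est_integrand ::
  "real \<Rightarrow> real \<Rightarrow> ('p \<Rightarrow> real \<Rightarrow> real) \<Rightarrow> (real \<Rightarrow> real \<Rightarrow> real)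
    \<Rightarrow> ('p \<Rightarrow> real \<Rightarrow> 'p::real_vector) \<Rightarrow> real measure \<Rightarrow> 'p \<Rightarrow> real \<Rightarrow> 'p" where
  "est_integrand \<alpha> lam f W u G t x =
     (Kfun (Acoef \<alpha> lam) (gstar W G x / fstar f W t x - 1) * fstar f W t x powr (1 + \<alpha>)) *\<^sub>R u t x"

definition est_fun ::
  "real \<Rightarrow> real \<Rightarrow> ('p \<Rightarrow> real \<Rightarrow> real) \<Rightarrow> (real \<Rightarrow> real \<Rightarrow> real)
    \<Rightarrow> ('p \<Rightarrow> real \<Rightarrow> 'p::{banach,second_countable_topology}) \<Rightarrow> real measure \<Rightarrow> 'p \<Rightarrow> 'p" where
  "est_fun \<alpha> lam f W u G t = (\<integral>x. est_integrand \<alpha> lam f W u G t x \<partial>lborel)"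

definition outer :: "real^'n \<Rightarrow> real^'n^'n" where
  "outer v = (\<chi> i j. v $ i * v $ j)"

definition ualpha ::
  "real \<Rightarrow> ('p \<Rightarrow> real \<Rightarrow> real) \<Rightarrow> (real \<Rightarrow> real \<Rightarrow> real) \<Rightarrow> ('p \<Rightarrow> real \<Rightarrow> real^'n)
    \<Rightarrow> 'p \<Rightarrow> real \<Rightarrow> real^'n" where
  "ualpha \<alpha> f W u t y = (\<integral>x. (fstar f W t x powr \<alpha> * W x y) *\<^sub>R u t x \<partial>lborel)"

definition u2alpha ::
  "real \<Rightarrow> ('p \<Rightarrow> real \<Rightarrow> real) \<Rightarrow> (real \<Rightarrow> real \<Rightarrow> real) \<Rightarrow> ('p \<Rightarrow> real \<Rightarrow> real^'n)
    \<Rightarrow> 'p \<Rightarrow> real \<Rightarrow> real^'n^'n" where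
  "u2alpha \<alpha> f W u t y = (\<integral>x. (fstar f W t x powr \<alpha> * W x y) *\<^sub>R outer (u t x) \<partial>lborel)"

definition IF :: "(real measure \<Rightarrow> 'a::real_normed_vector) \<Rightarrow> real measure \<Rightarrow> real \<Rightarrow> 'a" where
  "IF T G y = vector_derivative (\<lambda>e. T (contam G y e)) (at 0 within {0..1})"

end

theory Submission
  imports Defs
begin

text \<open>Differentiate the estimating equation along the curve \<open>\<epsilon> \<mapsto> (\<epsilon>, T(G\<^sub>\<epsilon>))\<close> at
  \<open>\<epsilon> = 0\<close>. At the model \<open>g\<^sup>* = f\<^sup>*\<^sub>\<theta>\<close>, so \<open>K\<close> is evaluated at \<open>0\<close>, where it vanishes and
  has slope \<open>1\<close> for every \<open>A\<close>; hence only the derivative of \<open>g\<^sup>*/f\<^sup>*\<^sub>t\<close> survives, namely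
  \<open>W(x,y) - f\<^sup>*\<^sub>\<theta>(x)\<close> in \<open>\<epsilon>\<close> and \<open>-f\<^sup>*\<^sub>\<theta>(x) \<tilde>u\<^sub>\<theta>(x)\<close> in \<open>t\<close>. Integrating against
  \<open>\<tilde>u\<^sub>\<theta> (f\<^sup>*\<^sub>\<theta>)\<^sup>\<alpha>\<close> and using Fubini to turn \<open>\<integral> f\<^sup>*\<^sub>\<theta>(x) \<dots> dx\<close> into \<open>E\<^sub>\<theta>\<close> of the smoothed
  scores gives \<open>J\<^sup>* IF = u\<^sup>\<alpha>\<^sup>*(y) - E\<^sub>\<theta> u\<^sup>\<alpha>\<^sup>*\<close>.\<close>

lemma contam_0 [simp]: "contam M y 0 = M"
  by (simp add: contam_def measure_of_of_measure)

lemma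
  fixes M :: "real measure"
  assumes e: "0 \<le> e" "e \<le> 1"
  shows sets_contam: "sets (contam M y e) = sets M"
    and space_contam: "space (contam M y e) = space M"
    and emeasure_contam: "A \<in> sets M \<Longrightarrow>
      emeasure (contam M y e) A = ennreal (1 - e) * emeasure M A + ennreal e * indicator A y"
proof -
  let ?\<mu> = "\<lambda>A. ennreal (1 - e) * emeasure M A + ennreal e * indicator A y"
  have "countably_additive (sets M) ?\<mu>"
    unfolding countably_additive_def
  proof (intro allI impI)
    fix A :: "nat \<Rightarrow> real set"
    assume A: "range A \<subseteq> sets M" "disjoint_family A" "\<Union> (range A) \<in> sets M"
    have "(\<Sum>i. ?\<mu> (A i)) = ennreal (1 - e) * (\<Sum>i. emeasure M (A i)) + ennreal e * (\<Sum>i. indicator (A i) y)"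
      by (simp add: suminf_add[symmetric] ennreal_suminf_cmult)
    also have "\<dots> = ?\<mu> (\<Union> (range A))"
      using A by (simp add: suminf_emeasure suminf_indicator)
    finally show "(\<Sum>i. ?\<mu> (A i)) = ?\<mu> (\<Union> (range A))" .
  qed
  moreover have "positive (sets M) ?\<mu>"
    by (simp add: positive_def)
  ultimately show "A \<in> sets M \<Longrightarrow> emeasure (contam M y e) A = ?\<mu> A"
    unfolding contam_def by (intro emeasure_measure_of_sigma sets.sigma_algebra_axioms)
  show "sets (contam M y e) = sets M" "space (contam M y e) = space M"
    unfolding contam_def using sets.sets_into_space
    by (auto simp: sets_measure_of_conv space_measure_of_conv sets.sigma_sets_eq)
qed

lemma measurable_contam:
  assumes "0 \<le> e" "e \<le> 1"
  shows "contam M y e \<rightarrow>\<^sub>M N = M \<rightarrow>\<^sub>M N"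
  using measurable_cong_sets[OF sets_contam[OF assms] refl] .

lemma nn_integral_contam:
  fixes M :: "real measure" and h :: "real \<Rightarrow> ennreal"
  assumes e: "0 \<le> e" "e \<le> 1" and y: "y \<in> space M" and h: "h \<in> borel_measurable M"
  shows "(\<integral>\<^sup>+x. h x \<partial>contam M y e) = ennreal (1 - e) * (\<integral>\<^sup>+x. h x \<partial>M) + ennreal e * h y"
  using h
proof (induct rule: borel_measurable_induct)
  case (cong f g)
  have "(\<integral>\<^sup>+x. f x \<partial>contam M y e) = (\<integral>\<^sup>+x. g x \<partial>contam M y e)"
    by (rule nn_integral_cong) (use cong space_contam[OF e] in auto)
  moreover have "(\<integral>\<^sup>+x. f x \<partial>M) = (\<integral>\<^sup>+x. g x \<partial>M)"
    by (rule nn_integral_cong) (use cong in auto)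
  ultimately show ?case
    using cong y by simp
next
  case (set A)
  then show ?case
    using emeasure_contam[OF e set] sets_contam[OF e] by simp
next
  case (mult v c)
  then show ?case
    by (simp add: measurable_contam[OF e] nn_integral_cmult distrib_left mult_ac)
next
  case (add v w)
  then show ?case
    by (simp add: measurable_contam[OF e] nn_integral_add algebra_simps)
next
  case (seq U)
  have U: "\<And>i. U i \<in> borel_measurable (contam M y e)"
    using seq by (simp add: measurable_contam[OF e])
  have "(\<integral>\<^sup>+x. (SUP i. U i x) \<partial>contam M y e) = (SUP i. \<integral>\<^sup>+x. U i x \<partial>contam M y e)"
    by (rule nn_integral_monotone_convergence_SUP[OF seq(4) U])
  also have "\<dots> = (SUP i. ennreal (1 - e) * (\<integral>\<^sup>+x. U i x \<partial>M) + ennreal e * U i y)"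
    using seq(3) by simp
  also have "\<dots> = (SUP i. ennreal (1 - e) * (\<integral>\<^sup>+x. U i x \<partial>M)) + (SUP i. ennreal e * U i y)"
    by (rule ennreal_SUP_add)
       (auto intro!: mult_left_mono nn_integral_mono le_funD[OF incseqD[OF seq(4)]] simp: incseq_def)
  also have "\<dots> = ennreal (1 - e) * (\<integral>\<^sup>+x. (SUP i. U i x) \<partial>M) + ennreal e * (SUP i. U i y)"
    by (simp add: SUP_mult_left_ennreal nn_integral_monotone_convergence_SUP[OF seq(4) seq(1)])
  finally show ?case
    unfolding SUP_apply .
qed

lemma gstar_contam:
  fixes M :: "real measure"
  assumes e: "0 \<le> e" "e \<le> 1" and y: "y \<in> space M"
    and W_meas: "W x \<in> borel_measurable M" and W_nonneg: "\<And>z. W x z \<ge> 0"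
    and W_int: "integrable M (W x)"
  shows "gstar W (contam M y e) x = (1 - e) * gstar W M x + e * W x y"
proof -
  have "gstar W (contam M y e) x = enn2real (\<integral>\<^sup>+z. ennreal (W x z) \<partial>contam M y e)"
    unfolding gstar_def
    by (rule integral_eq_nn_integral) (use W_meas W_nonneg in \<open>auto simp: measurable_contam[OF e]\<close>)
  also have "\<dots> = enn2real (ennreal (1 - e) * ennreal (gstar W M x) + ennreal e * ennreal (W x y))"
    using nn_integral_contam[OF e y, of "\<lambda>z. ennreal (W x z)"] W_meas W_int W_nonneg
    by (simp add: gstar_def nn_integral_eq_integral)
  also have "\<dots> = (1 - e) * gstar W M x + e * W x y"
    using e W_nonneg[of y] integral_nonneg_AE[of "W x" M] W_nonneg unfolding gstar_def
    by (simp add: ennreal_mult[symmetric] ennreal_plus[symmetric] del: ennreal_plus)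
  finally show ?thesis .
qed

lemma gstar_Fdist:
  assumes "f t \<in> borel_measurable borel" "\<And>z. f t z \<ge> 0"
    and "case_prod W \<in> borel_measurable (lborel \<Otimes>\<^sub>M lborel)"
  shows "gstar W (Fdist f t) x = fstar f W t x"
  unfolding gstar_def fstar_def Fdist_def
  using assms measurable_Pair2[OF assms(3), of x]
  by (subst integral_density) (auto simp: mult.commute)

lemma has_derivative_vanishing_Bfun:
  fixes a :: "'a::real_normed_vector \<Rightarrow> real"
  assumes da: "(a has_derivative a') (at x within S)" and a0: "a x = 0"
  shows "Bfun (\<lambda>z. a z / norm (z - x)) (at x within S)"
proof -
  interpret a': bounded_linear a'
    using da by (rule has_derivative_bounded_linear)
  obtain K where K: "K > 0" "\<And>h. norm (a' h) \<le> norm h * K"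
    using a'.pos_bounded by blast
  have "((\<lambda>z. (a z - a' (z - x)) / norm (z - x)) \<longlongrightarrow> 0) (at x within S)"
    using da a0 by (simp add: has_derivative_within divide_inverse_commute)
  then have "eventually (\<lambda>z. norm ((a z - a' (z - x)) / norm (z - x)) < 1) (at x within S)"
    unfolding tendsto_iff by (auto simp: dist_norm)
  then have "eventually (\<lambda>z. norm (a z / norm (z - x)) \<le> 1 + K) (at x within S)"
  proof eventually_elim
    case (elim z)
    have "norm (a' (z - x) / norm (z - x)) \<le> K"
      using K by (cases "z = x") (simp_all add: divide_le_eq mult.commute)
    moreover have "a z / norm (z - x) = (a z - a' (z - x)) / norm (z - x) + a' (z - x) / norm (z - x)"
      by (simp add: diff_divide_distrib)
    ultimately show ?case
      using elim by (smt (verit) norm_triangle_ineq)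
  qed
  then show ?thesis
    by (rule BfunI)
qed

lemma has_derivative_scaleR_vanishing:
  fixes a :: "'a::real_normed_vector \<Rightarrow> real" and b :: "'a \<Rightarrow> 'b::real_normed_vector"
  assumes da: "(a has_derivative a') (at x within S)" and a0: "a x = 0"
    and cb: "continuous (at x within S) b"
  shows "((\<lambda>z. a z *\<^sub>R b z) has_derivative (\<lambda>h. a' h *\<^sub>R b x)) (at x within S)"
proof -
  have "Zfun (\<lambda>z. (a z / norm (z - x)) *\<^sub>R (b z - b x)) (at x within S)"
    using cb
    by (intro bounded_bilinear.Bfun_prod_Zfun[OF bounded_bilinear_scaleR has_derivative_vanishing_Bfun[OF da a0]])
       (simp add: continuous_within tendsto_Zfun_iff)
  then have "((\<lambda>z. a z *\<^sub>R (b z - b x)) has_derivative (\<lambda>h. 0)) (at x within S)"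
    by (simp add: has_derivative_within tendsto_Zfun_iff a0 divide_inverse_commute)
  from has_derivative_add[OF has_derivative_scaleR_left[OF da, of "b x"] this]
  show ?thesis
    by (simp add: algebra_simps)
qed

lemma Kfun_0 [simp]: "Kfun A 0 = 0"
  by (simp add: Kfun_def)

lemma has_derivative_Kfun_at_1:
  assumes dq: "(q has_derivative q') (at x within S)" and q1: "q x = 1" and x: "x \<in> S"
  shows "((\<lambda>z. Kfun A (q z - 1)) has_derivative q') (at x within S)"
proof (cases "A = 0")
  case True
  then show ?thesis
    using has_derivative_ln[OF _ dq] q1 by (simp add: Kfun_def)
next
  case False
  have "((\<lambda>z. q z powr A) has_derivative (\<lambda>h. q' h * A)) (at x within S)"
    using has_derivative_powr[OF dq has_derivative_const, of A] q1 x by simp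
  from has_derivative_divide'[OF has_derivative_diff[OF this has_derivative_const] has_derivative_const, of A 1]
  show ?thesis
    using False by (simp add: Kfun_def)
qed

lemma frechet_derivative_within_interval_times_open:
  fixes f :: "real \<times> 'v::euclidean_space \<Rightarrow> 'b::real_normed_vector"
  assumes "open \<Theta>" "\<theta> \<in> \<Theta>"
    and df: "(f has_derivative f') (at (0, \<theta>) within {0..1} \<times> \<Theta>)"
  shows "frechet_derivative f (at (0, \<theta>) within {0..1} \<times> \<Theta>) = f'"
proof (rule frechet_derivative_unique_within[OF _ df])
  show "(f has_derivative frechet_derivative f (at (0, \<theta>) within {0..1} \<times> \<Theta>)) (at (0, \<theta>) within {0..1} \<times> \<Theta>)"
    using df frechet_derivative_works differentiableI by blast
  fix i :: "real \<times> 'v" and e :: real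
  assume i: "i \<in> Basis" and e: "e > 0"
  obtain r where r: "r > 0" "ball \<theta> r \<subseteq> \<Theta>"
    using assms(1,2) open_contains_ball by blast
  define d where "d = min (e / 2) (min (r / 2) 1)"
  have d: "0 < d" "d < e" "d < r" "d \<le> 1"
    using r e by (auto simp: d_def)
  from i consider "i = (1, 0)" | j where "j \<in> Basis" "i = (0, j)"
    by (auto simp: Basis_prod_def)
  then show "\<exists>d. 0 < \<bar>d\<bar> \<and> \<bar>d\<bar> < e \<and> (0, \<theta>) + d *\<^sub>R i \<in> {0..1} \<times> \<Theta>"
  proof cases
    case 1
    then show ?thesis
      using d assms(2) by (intro exI[of _ d]) auto
  next
    case (2 j)
    have "\<theta> + d *\<^sub>R j \<in> \<Theta>"
      using d 2 r(2) by (auto simp: dist_norm)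
    then show ?thesis
      using d 2 by (intro exI[of _ d]) auto
  qed
qed

lemma has_derivative_zero_along_curve:
  fixes H :: "real \<times> 'v::euclidean_space \<Rightarrow> 'b::real_normed_vector"
  assumes dH: "(H has_derivative D) (at (0, \<theta>) within {0..1} \<times> \<Theta>)"
    and dT: "(T has_vector_derivative T') (at 0 within {0..1})"
    and T0: "T 0 = \<theta>" and T_in: "\<And>e. e \<in> {0..1} \<Longrightarrow> T e \<in> \<Theta>"
    and e0: "e0 > 0" and H0: "\<And>e. e \<in> {0..e0} \<Longrightarrow> H (e, T e) = 0"
  shows "D (1, T') = 0"
proof -
  let ?g = "\<lambda>e. (e, T e)"
  have dg: "(?g has_derivative (\<lambda>h. (h, h *\<^sub>R T'))) (at 0 within {0..1})"
    using has_derivative_Pair[OF has_derivative_ident dT[unfolded has_vector_derivative_def]] .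
  have "(H has_derivative D) (at (?g 0) within ?g ` {0..1})"
    using T0 T_in by (intro has_derivative_subset[OF dH[folded T0]]) auto
  from diff_chain_within[OF dg this]
  have "((\<lambda>e. H (e, T e)) has_derivative (\<lambda>h. D (h, h *\<^sub>R T'))) (at 0 within {0..1})"
    by (simp add: o_def)
  then have "((\<lambda>_. 0) has_derivative (\<lambda>h. D (h, h *\<^sub>R T'))) (at 0 within {0..1})"
    by (rule has_derivative_transform_within[OF _ e0]) (use H0 in \<open>auto simp: dist_real_def\<close>)
  moreover have "\<exists>d. 0 < \<bar>d\<bar> \<and> \<bar>d\<bar> < e \<and> 0 + d *\<^sub>R i \<in> {0..1::real}" if "i \<in> Basis" "e > 0" for i e
    using that by (intro exI[of _ "min (e / 2) 1"]) auto
  ultimately have "(\<lambda>h. D (h, h *\<^sub>R T')) = (\<lambda>_. 0)"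
    by (intro frechet_derivative_unique_within[OF _ has_derivative_const])
  then show ?thesis
    by (metis scaleR_one)
qed

lemma borel_measurable_fstar [measurable]:
  assumes "f t \<in> borel_measurable borel" "case_prod W \<in> borel_measurable (lborel \<Otimes>\<^sub>M lborel)"
  shows "fstar f W t \<in> borel_measurable borel"
proof -
  have "(\<lambda>(x, z). W x z * f t z) \<in> borel_measurable (lborel \<Otimes>\<^sub>M lborel)"
    using assms by measurable
  then show ?thesis
    unfolding fstar_def[abs_def] using lborel.borel_measurable_lebesgue_integral by simp
qed

text \<open>A gradient is the pointwise limit of difference quotients, hence inherits measurability.\<close>

lemma borel_measurable_gradient:
  fixes \<psi> :: "'a \<Rightarrow> 'v::euclidean_space \<Rightarrow> real" and g :: "'a \<Rightarrow> 'v"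
  assumes \<Theta>: "open \<Theta>" "\<theta> \<in> \<Theta>"
    and \<psi>_meas: "\<And>s. s \<in> \<Theta> \<Longrightarrow> (\<lambda>x. \<psi> x s) \<in> borel_measurable M"
    and \<psi>_deriv: "\<And>x. (\<psi> x has_derivative (\<lambda>v. g x \<bullet> v)) (at \<theta>)"
  shows "g \<in> borel_measurable M"
proof (rule borel_measurable_euclidean_space[THEN iffD2], intro ballI)
  fix b :: 'v
  assume b: "b \<in> Basis"
  obtain r where r: "r > 0" "ball \<theta> r \<subseteq> \<Theta>"
    using \<Theta> open_contains_ball by blast
  define h where "h n = r / (2 * (real n + 1))" for n :: nat
  have h_pos: "h n > 0" for n
    using r by (simp add: h_def)
  have h_less: "h n < r" for n
    using r by (simp add: h_def field_simps) (smt (verit) mult_nonneg_nonneg of_nat_0_le_iff)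
  have h_in: "\<theta> + h n *\<^sub>R b \<in> \<Theta>" for n
    using r(2) h_pos[of n] h_less[of n] b by (auto simp: dist_norm)
  have "(\<lambda>n. r / 2 * inverse (real n + 1)) \<longlonglongrightarrow> r / 2 * 0"
    using LIMSEQ_inverse_real_of_nat by (intro tendsto_mult tendsto_const) (simp add: add.commute)
  moreover have "(\<lambda>n. r / 2 * inverse (real n + 1)) = h"
    by (simp add: h_def fun_eq_iff field_simps)
  ultimately have "filterlim h (at 0) sequentially"
    using h_pos by (intro filterlim_atI) (auto simp: less_imp_neq[symmetric])
  moreover have "((\<lambda>t. (\<psi> x (\<theta> + t *\<^sub>R b) - \<psi> x \<theta>) / t) \<longlongrightarrow> g x \<bullet> b) (at 0)" for x
  proof -
    have line: "((\<lambda>t. \<theta> + t *\<^sub>R b) has_derivative (\<lambda>t. t *\<^sub>R b)) (at 0)"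
      by (auto intro!: derivative_eq_intros)
    have "((\<lambda>t. \<psi> x (\<theta> + t *\<^sub>R b)) has_derivative (\<lambda>t. g x \<bullet> (t *\<^sub>R b))) (at 0)"
      using has_derivative_compose[OF line, of "\<psi> x" "\<lambda>v. g x \<bullet> v"] \<psi>_deriv[of x] by simp
    then have "((\<lambda>t. \<psi> x (\<theta> + t *\<^sub>R b)) has_field_derivative g x \<bullet> b) (at 0)"
      by (simp add: has_field_derivative_def mult.commute[of _ "g x \<bullet> b"])
    then show ?thesis
      using DERIV_D by fastforce
  qed
  ultimately have "(\<lambda>n. (\<psi> x (\<theta> + h n *\<^sub>R b) - \<psi> x \<theta>) / h n) \<longlonglongrightarrow> g x \<bullet> b" for x
    by (rule filterlim_compose[rotated])
  moreover have "(\<lambda>x. (\<psi> x (\<theta> + h n *\<^sub>R b) - \<psi> x \<theta>) / h n) \<in> borel_measurable M" for n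
    using \<psi>_meas[OF h_in[of n]] \<psi>_meas[OF \<Theta>(2)] by measurable
  ultimately show "(\<lambda>x. g x \<bullet> b) \<in> borel_measurable M"
    by (rule borel_measurable_LIMSEQ_real[where u = "\<lambda>n x. (\<psi> x (\<theta> + h n *\<^sub>R b) - \<psi> x \<theta>) / h n"])
qed

lemma borel_measurable_outer [measurable]: "outer \<in> borel_measurable borel"
  unfolding outer_def[abs_def] by (intro borel_measurable_continuous_onI continuous_intros)

lemma outer_mult_vector: "outer v *v w = (v \<bullet> w) *\<^sub>R v"
  by (simp add: outer_def matrix_vector_mult_def inner_vec_def vec_eq_iff sum_distrib_left mult_ac)

lemma bounded_linear_mult_vector_left: "bounded_linear (\<lambda>A::real^'n^'m. A *v w)"
  by (intro linear_conv_bounded_linear[THEN iffD1] linearI)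
     (simp_all add: matrix_vector_mult_def vec_eq_iff sum.distrib algebra_simps sum_distrib_left)

lemma matrix_inv_mult_vector_cancel:
  fixes A :: "real^'n^'m"
  assumes "invertible A"
  shows "matrix_inv A *v (A *v v) = v"
proof -
  have "A ** matrix_inv A = mat 1 \<and> matrix_inv A ** A = mat 1"
    using assms unfolding invertible_def matrix_inv_def by (rule someI_ex)
  then show ?thesis
    by (metis matrix_vector_mul_assoc matrix_vector_mul_lid)
qed

lemma integral_density_kernel:
  fixes w :: "real \<Rightarrow> 'b::{banach, second_countable_topology}"
  assumes p: "p \<in> borel_measurable borel" "\<And>z. p z \<ge> 0"
    and W: "case_prod W \<in> borel_measurable (lborel \<Otimes>\<^sub>M lborel)"
    and w: "w \<in> borel_measurable borel"
    and W_int: "\<And>x. integrable lborel (\<lambda>z. W x z * p z)"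
    and int: "integrable (lborel \<Otimes>\<^sub>M lborel) (\<lambda>(x, z). (p z * W x z) *\<^sub>R w x)"
  shows "(\<integral>z. (\<integral>x. W x z *\<^sub>R w x \<partial>lborel) \<partial>density lborel (\<lambda>z. ennreal (p z)))
    = (\<integral>x. (\<integral>z. W x z * p z \<partial>lborel) *\<^sub>R w x \<partial>lborel)"
proof -
  have [measurable]: "p \<in> borel_measurable lborel" "w \<in> borel_measurable borel"
    "case_prod W \<in> borel_measurable (lborel \<Otimes>\<^sub>M lborel)"
    using p w W by simp_all
  have "(\<lambda>z. \<integral>x. W x z *\<^sub>R w x \<partial>lborel) \<in> borel_measurable lborel"
    by (intro lborel.borel_measurable_lebesgue_integral) measurable
  then have "(\<integral>z. (\<integral>x. W x z *\<^sub>R w x \<partial>lborel) \<partial>density lborel (\<lambda>z. ennreal (p z)))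
      = (\<integral>z. (\<integral>x. (p z * W x z) *\<^sub>R w x \<partial>lborel) \<partial>lborel)"
    using p by (subst integral_density) (auto simp flip: integral_scaleR_right)
  also have "\<dots> = (\<integral>x. (\<integral>z. (p z * W x z) *\<^sub>R w x \<partial>lborel) \<partial>lborel)"
    using int by (rule lborel_pair.Fubini_integral[where f = "\<lambda>x z. (p z * W x z) *\<^sub>R w x", simplified])
  also have "\<dots> = (\<integral>x. (\<integral>z. W x z * p z \<partial>lborel) *\<^sub>R w x \<partial>lborel)"
    using W_int by (simp add: mult.commute)
  finally show ?thesis .
qed

locale smoothed_model =
  fixes f :: "real^'p \<Rightarrow> real \<Rightarrow> real" and W :: "real \<Rightarrow> real \<Rightarrow> real"
    and u :: "real^'p \<Rightarrow> real \<Rightarrow> real^'p" and \<Theta> :: "(real^'p) set" and \<theta> :: "real^'p"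
  assumes \<Theta>: "open \<Theta>" "\<theta> \<in> \<Theta>"
    and dens_meas: "\<And>t. t \<in> \<Theta> \<Longrightarrow> f t \<in> borel_measurable borel"
    and dens_nonneg: "\<And>x. f \<theta> x \<ge> 0"
    and W_meas: "case_prod W \<in> borel_measurable (lborel \<Otimes>\<^sub>M lborel)"
    and W_nonneg: "\<And>x z. W x z \<ge> 0"
    and fstar_pos: "\<And>t x. t \<in> \<Theta> \<Longrightarrow> fstar f W t x > 0"
    and score: "\<And>x. ((\<lambda>s. ln (fstar f W s x)) has_derivative (\<lambda>v. u \<theta> x \<bullet> v)) (at \<theta>)"
    and score_cont: "\<And>x. continuous (at \<theta>) (\<lambda>t. u t x)"
begin

lemma measurable_model [measurable]:
  "f \<theta> \<in> borel_measurable borel" "fstar f W \<theta> \<in> borel_measurable borel"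
  using dens_meas[OF \<Theta>(2)] borel_measurable_fstar[of f \<theta> W, OF dens_meas[OF \<Theta>(2)] W_meas]
  by simp_all

lemma borel_measurable_score [measurable]: "u \<theta> \<in> borel_measurable borel"
proof (rule borel_measurable_gradient[OF \<Theta> _ score])
  fix s
  assume "s \<in> \<Theta>"
  then show "(\<lambda>x. ln (fstar f W s x)) \<in> borel_measurable borel"
    using borel_measurable_fstar[OF dens_meas W_meas] by measurable
qed

lemma fstar_has_derivative:
  "((\<lambda>s. fstar f W s x) has_derivative (\<lambda>v. fstar f W \<theta> x * (u \<theta> x \<bullet> v))) (at \<theta>)"
proof -
  have "((\<lambda>s. exp (ln (fstar f W s x))) has_derivative (\<lambda>v. fstar f W \<theta> x * (u \<theta> x \<bullet> v))) (at \<theta>)"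
    using has_derivative_exp[OF score[of x]] fstar_pos[OF \<Theta>(2)] by (simp add: mult.commute)
  then show ?thesis
    by (rule has_derivative_transform_within_open[OF _ \<Theta>]) (simp add: fstar_pos)
qed

lemma kernel_integrable: "integrable lborel (\<lambda>z. W x z * f \<theta> z)"
  using fstar_pos[OF \<Theta>(2), of x] not_integrable_integral_eq by (force simp: fstar_def)

lemma gstar_contam_model:
  assumes "0 \<le> e" "e \<le> 1"
  shows "gstar W (contam (Fdist f \<theta>) y e) x = (1 - e) * fstar f W \<theta> x + e * W x y"
proof -
  have [measurable]: "W x \<in> borel_measurable borel"
    using measurable_Pair2[OF W_meas, of x] by simp
  have "integrable (Fdist f \<theta>) (W x)"
    unfolding Fdist_def using kernel_integrable[of x] dens_nonneg
    by (subst integrable_density) (auto simp: mult.commute)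
  then show ?thesis
    using gstar_contam[OF assms, of y "Fdist f \<theta>" W x] W_nonneg
      gstar_Fdist[of f \<theta>, OF measurable_model(1) dens_nonneg W_meas]
    by (simp add: Fdist_def)
qed

definition est_integrand_deriv :: "real \<Rightarrow> real \<Rightarrow> real \<Rightarrow> real \<times> (real^'p) \<Rightarrow> real^'p" where
  "est_integrand_deriv \<alpha> y x = (\<lambda>(e, v).
     ((e * (W x y - fstar f W \<theta> x) - fstar f W \<theta> x * (u \<theta> x \<bullet> v)) * fstar f W \<theta> x powr \<alpha>) *\<^sub>R u \<theta> x)"

text \<open>Whatever \<open>A\<close> is, \<open>K\<close> has derivative \<open>1\<close> at \<open>0\<close>; this is why \<open>\<lambda>\<close> drops out.\<close>

lemma est_integrand_has_derivative:
  "((\<lambda>(e, t). est_integrand \<alpha> lam f W u (contam (Fdist f \<theta>) y e) t x)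
     has_derivative est_integrand_deriv \<alpha> y x) (at (0, \<theta>) within {0..1} \<times> \<Theta>)"
proof -
  let ?P = "{0..1::real} \<times> \<Theta>" and ?c = "fstar f W \<theta> x"
  have c: "?c > 0"
    using fstar_pos[OF \<Theta>(2)] .
  have P: "(0, \<theta>) \<in> ?P"
    using \<Theta> by simp
  define q where "q p = ((1 - fst p) * ?c + fst p * W x y) / fstar f W (snd p) x" for p :: "real \<times> (real^'p)"
  define Q where "Q z = (fst z * (W x y - ?c) - ?c * (u \<theta> x \<bullet> snd z)) / ?c" for z :: "real \<times> (real^'p)"
  have "((\<lambda>s. fstar f W s x) has_derivative (\<lambda>v. ?c * (u \<theta> x \<bullet> v))) (at (snd (0::real, \<theta>)))"
    using fstar_has_derivative by simp
  then have d_fstar: "((\<lambda>p. fstar f W (snd p) x) has_derivative (\<lambda>z. ?c * (u \<theta> x \<bullet> snd z)))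
      (at (0, \<theta>) within ?P)"
    by (rule has_derivative_compose[OF bounded_linear_imp_has_derivative[OF bounded_linear_snd]])
  have dq: "(q has_derivative Q) (at (0, \<theta>) within ?P)"
    unfolding q_def[abs_def]
    by (rule has_derivative_eq_rhs[OF has_derivative_divide[OF _ d_fstar]], (rule derivative_eq_intros refl)+)
       (use c in \<open>auto simp: fun_eq_iff Q_def field_simps\<close>)
  have q1: "q (0, \<theta>) = 1"
    using c by (simp add: q_def)
  have d_powr: "((\<lambda>p. fstar f W (snd p) x powr (1 + \<alpha>)) has_derivative
      (\<lambda>z. ?c powr (1 + \<alpha>) * (?c * (u \<theta> x \<bullet> snd z) * (1 + \<alpha>) / ?c))) (at (0, \<theta>) within ?P)"
    using has_derivative_powr[OF d_fstar has_derivative_const _ P, of "1 + \<alpha>"] c by simp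
  have d_weight: "((\<lambda>p. Kfun (Acoef \<alpha> lam) (q p - 1) * fstar f W (snd p) x powr (1 + \<alpha>)) has_derivative
      (\<lambda>z. Q z * ?c powr (1 + \<alpha>))) (at (0, \<theta>) within ?P)"
    using has_derivative_mult[OF has_derivative_Kfun_at_1[OF dq q1 P, of "Acoef \<alpha> lam"] d_powr] q1
    by simp
  have "isCont (\<lambda>p. u (snd p) x) (0::real, \<theta>)"
    using isCont_o2[where f = snd and a = "(0::real, \<theta>)" and g = "\<lambda>t. u t x"] score_cont[of x] by simp
  then have "continuous (at (0, \<theta>) within ?P) (\<lambda>p. u (snd p) x)"
    by (rule continuous_at_imp_continuous_at_within)
  from has_derivative_scaleR_vanishing[OF d_weight _ this]
  have d_product: "((\<lambda>p. (Kfun (Acoef \<alpha> lam) (q p - 1) * fstar f W (snd p) x powr (1 + \<alpha>)) *\<^sub>R u (snd p) x)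
      has_derivative (\<lambda>z. (Q z * ?c powr (1 + \<alpha>)) *\<^sub>R u \<theta> x)) (at (0, \<theta>) within ?P)"
    using q1 by simp
  have "Q z * ?c powr (1 + \<alpha>) = (fst z * (W x y - ?c) - ?c * (u \<theta> x \<bullet> snd z)) * ?c powr \<alpha>" for z
    using c by (simp add: Q_def powr_add)
  then have deriv_eq: "(\<lambda>z. (Q z * ?c powr (1 + \<alpha>)) *\<^sub>R u \<theta> x) = est_integrand_deriv \<alpha> y x"
    by (auto simp: est_integrand_deriv_def)
  have "(\<lambda>(e, t). est_integrand \<alpha> lam f W u (contam (Fdist f \<theta>) y e) t x) p
      = (Kfun (Acoef \<alpha> lam) (q p - 1) * fstar f W (snd p) x powr (1 + \<alpha>)) *\<^sub>R u (snd p) x" if "p \<in> ?P" for p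
    using that by (auto simp: est_integrand_def q_def gstar_contam_model)
  then show ?thesis
    using has_derivative_transform_within[OF d_product[unfolded deriv_eq] zero_less_one P] by simp
qed

lemma
  fixes w :: "real \<Rightarrow> 'b::{banach, second_countable_topology}"
  assumes w: "w \<in> borel_measurable borel"
    and int: "integrable (lborel \<Otimes>\<^sub>M lborel) (\<lambda>(x, z). (f \<theta> z * W x z * fstar f W \<theta> x powr \<alpha>) *\<^sub>R w x)"
  shows integrable_kernel_model: "integrable lborel (\<lambda>x. (fstar f W \<theta> x * fstar f W \<theta> x powr \<alpha>) *\<^sub>R w x)"
    and integral_kernel_model: "(\<integral>z. (\<integral>x. (fstar f W \<theta> x powr \<alpha> * W x z) *\<^sub>R w x \<partial>lborel) \<partial>Fdist f \<theta>)
      = (\<integral>x. (fstar f W \<theta> x * fstar f W \<theta> x powr \<alpha>) *\<^sub>R w x \<partial>lborel)"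
proof -
  have inner: "(\<integral>z. (f \<theta> z * W x z * fstar f W \<theta> x powr \<alpha>) *\<^sub>R w x \<partial>lborel)
      = (fstar f W \<theta> x * fstar f W \<theta> x powr \<alpha>) *\<^sub>R w x" for x
    using kernel_integrable[of x] by (simp add: fstar_def mult.commute)
  show "integrable lborel (\<lambda>x. (fstar f W \<theta> x * fstar f W \<theta> x powr \<alpha>) *\<^sub>R w x)"
    using lborel_pair.integrable_fst[OF int] by (simp add: inner)
  have "(\<integral>z. (\<integral>x. W x z *\<^sub>R (fstar f W \<theta> x powr \<alpha> *\<^sub>R w x) \<partial>lborel) \<partial>Fdist f \<theta>)
      = (\<integral>x. (\<integral>z. W x z * f \<theta> z \<partial>lborel) *\<^sub>R (fstar f W \<theta> x powr \<alpha> *\<^sub>R w x) \<partial>lborel)"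
    unfolding Fdist_def
    using int w by (intro integral_density_kernel dens_nonneg W_meas kernel_integrable) (simp_all add: mult_ac)
  then show "(\<integral>z. (\<integral>x. (fstar f W \<theta> x powr \<alpha> * W x z) *\<^sub>R w x \<partial>lborel) \<partial>Fdist f \<theta>)
      = (\<integral>x. (fstar f W \<theta> x * fstar f W \<theta> x powr \<alpha>) *\<^sub>R w x \<partial>lborel)"
    by (simp add: fstar_def mult.commute)
qed

lemma integral_est_integrand_deriv:
  assumes int1: "integrable (lborel \<Otimes>\<^sub>M lborel)
        (\<lambda>(x, z). (f \<theta> z * W x z * fstar f W \<theta> x powr \<alpha>) *\<^sub>R u \<theta> x)"
    and int2: "integrable (lborel \<Otimes>\<^sub>M lborel)
        (\<lambda>(x, z). (f \<theta> z * W x z * fstar f W \<theta> x powr \<alpha>) *\<^sub>R outer (u \<theta> x))"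
    and int3: "integrable lborel (\<lambda>x. (W x y * fstar f W \<theta> x powr \<alpha>) *\<^sub>R u \<theta> x)"
  shows "(\<integral>x. est_integrand_deriv \<alpha> y x (1, v) \<partial>lborel)
    = ualpha \<alpha> f W u \<theta> y - (\<integral>z. ualpha \<alpha> f W u \<theta> z \<partial>Fdist f \<theta>)
      - (\<integral>z. u2alpha \<alpha> f W u \<theta> z \<partial>Fdist f \<theta>) *v v"
proof -
  let ?m = "\<lambda>x. fstar f W \<theta> x * fstar f W \<theta> x powr \<alpha>"
  have deriv: "est_integrand_deriv \<alpha> y x (1, v) = (W x y * fstar f W \<theta> x powr \<alpha>) *\<^sub>R u \<theta> x
      - ?m x *\<^sub>R u \<theta> x - (?m x *\<^sub>R outer (u \<theta> x)) *v v" for x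
    by (simp add: est_integrand_deriv_def outer_mult_vector scaleR_matrix_vector_assoc[symmetric] algebra_simps)
  have int_u: "integrable lborel (\<lambda>x. ?m x *\<^sub>R u \<theta> x)"
    using integrable_kernel_model[OF borel_measurable_score int1] .
  have int_outer: "integrable lborel (\<lambda>x. ?m x *\<^sub>R outer (u \<theta> x))"
    using integrable_kernel_model[of "\<lambda>x. outer (u \<theta> x)", OF _ int2] by simp
  have "(\<integral>x. est_integrand_deriv \<alpha> y x (1, v) \<partial>lborel)
      = (\<integral>x. (W x y * fstar f W \<theta> x powr \<alpha>) *\<^sub>R u \<theta> x \<partial>lborel)
        - (\<integral>x. ?m x *\<^sub>R u \<theta> x \<partial>lborel) - (\<integral>x. ?m x *\<^sub>R outer (u \<theta> x) \<partial>lborel) *v v"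
    unfolding deriv
    using int3 int_u integrable_bounded_linear[OF bounded_linear_mult_vector_left int_outer]
      integral_bounded_linear[OF bounded_linear_mult_vector_left int_outer]
    by simp
  moreover have "(\<integral>z. ualpha \<alpha> f W u \<theta> z \<partial>Fdist f \<theta>) = (\<integral>x. ?m x *\<^sub>R u \<theta> x \<partial>lborel)"
    unfolding ualpha_def using integral_kernel_model[OF borel_measurable_score int1] .
  moreover have "(\<integral>z. u2alpha \<alpha> f W u \<theta> z \<partial>Fdist f \<theta>) = (\<integral>x. ?m x *\<^sub>R outer (u \<theta> x) \<partial>lborel)"
    unfolding u2alpha_def using integral_kernel_model[of "\<lambda>x. outer (u \<theta> x)", OF _ int2] by simp
  ultimately show ?thesis
    by (simp add: ualpha_def mult.commute)
qed

end

theorem corollary1: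
  fixes f :: "real^'p \<Rightarrow> real \<Rightarrow> real"
    and \<Theta> :: "(real^'p) set"
    and W :: "real \<Rightarrow> real \<Rightarrow> real"
    and u :: "real^'p \<Rightarrow> real \<Rightarrow> real^'p"
    and T :: "real measure \<Rightarrow> real^'p"
    and \<alpha> lam y :: real
    and \<theta> :: "real^'p"
  defines "F \<equiv> Fdist f \<theta>"
  defines "J \<equiv> (\<integral>z. u2alpha \<alpha> f W u \<theta> z \<partial>F)"
  assumes alpha: "\<alpha> \<ge> 0"
    and Theta: "open \<Theta>" "\<theta> \<in> \<Theta>"
    \<comment> \<open>f_t are Lebesgue probability densities\<close>
    and dens_meas: "\<And>t. t \<in> \<Theta> \<Longrightarrow> f t \<in> borel_measurable borel"
    and dens_nonneg: "\<And>t x. t \<in> \<Theta> \<Longrightarrow> f t x \<ge> 0"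
    and dens_int: "\<And>t. t \<in> \<Theta> \<Longrightarrow> (\<integral>x. f t x \<partial>lborel) = 1"
    \<comment> \<open>W(., z) is a probability density for every z\<close>
    and W_meas: "case_prod W \<in> borel_measurable (lborel \<Otimes>\<^sub>M lborel)"
    and W_nonneg: "\<And>x z. W x z \<ge> 0"
    and W_dens: "\<And>z. (\<integral>x. W x z \<partial>lborel) = 1"
    and fstar_pos: "\<And>t x. t \<in> \<Theta> \<Longrightarrow> fstar f W t x > 0"
    \<comment> \<open>u t x is the score  grad_t log f*_t(x)\<close>
    and score: "\<And>t x. t \<in> \<Theta> \<Longrightarrow>
        ((\<lambda>s. ln (fstar f W s x)) has_derivative (\<lambda>v. u t x \<bullet> v)) (at t)"
    and score_cont: "\<And>x. continuous (at \<theta>) (\<lambda>t. u t x)"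
    \<comment> \<open>T is the minimum S*-divergence functional (on the contaminated distributions)\<close>
    and T_min: "\<And>e. e \<in> {0..1} \<Longrightarrow> T (contam F y e) \<in> \<Theta> \<and>
        (\<forall>t\<in>\<Theta>. Sdiv \<alpha> lam (gstar W (contam F y e)) (fstar f W (T (contam F y e)))
                 \<le> Sdiv \<alpha> lam (gstar W (contam F y e)) (fstar f W t))"
    \<comment> \<open>... and it satisfies the estimating equation\<close>
    and T_est: "\<exists>e0>0. \<forall>e\<in>{0..e0}.
        est_fun \<alpha> lam f W u (contam F y e) (T (contam F y e)) = 0"
    \<comment> \<open>Fisher consistency at the model\<close>
    and T_fisher: "T F = \<theta>"
    \<comment> \<open>regularity: differentiation under the integral sign of the estimating equation\<close>
    and interchange:
      "((\<lambda>(e, t). est_fun \<alpha> lam f W u (contam F y e) t) has_derivative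
          (\<lambda>z. \<integral>x. frechet_derivative (\<lambda>(e, t). est_integrand \<alpha> lam f W u (contam F y e) t x)
                        (at (0, \<theta>) within {0..1} \<times> \<Theta>) z \<partial>lborel))
        (at (0, \<theta>) within {0..1} \<times> \<Theta>)"
    \<comment> \<open>regularity: integrability conditions (Fubini)\<close>
    and int1: "integrable (lborel \<Otimes>\<^sub>M lborel)
        (\<lambda>(x, z). (f \<theta> z * W x z * fstar f W \<theta> x powr \<alpha>) *\<^sub>R u \<theta> x)"
    and int2: "integrable (lborel \<Otimes>\<^sub>M lborel)
        (\<lambda>(x, z). (f \<theta> z * W x z * fstar f W \<theta> x powr \<alpha>) *\<^sub>R outer (u \<theta> x))"
    and int3: "integrable lborel (\<lambda>x. (W x y * fstar f W \<theta> x powr \<alpha>) *\<^sub>R u \<theta> x)"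
    and J_inv: "invertible J"
    \<comment> \<open>the influence function exists\<close>
    and T_diff: "(\<lambda>e. T (contam F y e)) differentiable (at 0 within {0..1})"
  shows "IF T F y = matrix_inv J *v (ualpha \<alpha> f W u \<theta> y - (\<integral>z. ualpha \<alpha> f W u \<theta> z \<partial>F))"
proof -
  interpret smoothed_model f W u \<Theta> \<theta>
    using Theta dens_meas dens_nonneg W_meas W_nonneg fstar_pos score score_cont
    by unfold_locales auto
  define T' where "T' = IF T F y"
  have dT: "((\<lambda>e. T (contam F y e)) has_vector_derivative T') (at 0 within {0..1})"
    using T_diff unfolding T'_def IF_def by (simp add: vector_derivative_works)
  have "frechet_derivative (\<lambda>(e, t). est_integrand \<alpha> lam f W u (contam F y e) t x)
      (at (0, \<theta>) within {0..1} \<times> \<Theta>) = est_integrand_deriv \<alpha> y x" for x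
    unfolding F_def by (rule frechet_derivative_within_interval_times_open[OF Theta est_integrand_has_derivative])
  with interchange have dH: "((\<lambda>(e, t). est_fun \<alpha> lam f W u (contam F y e) t) has_derivative
      (\<lambda>z. \<integral>x. est_integrand_deriv \<alpha> y x z \<partial>lborel)) (at (0, \<theta>) within {0..1} \<times> \<Theta>)"
    by simp
  obtain e0 where "e0 > 0" "\<forall>e\<in>{0..e0}. est_fun \<alpha> lam f W u (contam F y e) (T (contam F y e)) = 0"
    using T_est by blast
  then have "(\<integral>x. est_integrand_deriv \<alpha> y x (1, T') \<partial>lborel) = 0"
    using has_derivative_zero_along_curve[OF dH dT] T_min T_fisher by simp
  then have "J *v T' = ualpha \<alpha> f W u \<theta> y - (\<integral>z. ualpha \<alpha> f W u \<theta> z \<partial>F)"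
    using integral_est_integrand_deriv[OF int1 int2 int3, of T'] unfolding F_def J_def
    by (simp add: algebra_simps)
  then show ?thesis
    by (metis T'_def matrix_inv_mult_vector_cancel[OF J_inv])
qed

end
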